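(* In the setting described in the context, for every node $p\in\mathcal{V}_h^C\cup\mathcal{M}_h^C$ with $u^h_1(p)\neq0$ (a non actual contact node), $$\langle\lambda^h,\phi_pe_1\rangle_h=0.$$
   Context: Let $\Omega\subset\mathbb{R}^2$ be a bounded polygonal Lipschitz domain with boundary partitioned into relatively open, pairwise disjoint parts $\Gamma_D,\Gamma_N,\Gamma_C$, $\mathrm{meas}(\Gamma_D)>0$, $\overline{\Gamma_C}\subset\partial\Omega\setminus\overline{\Gamma_D}$, outward unit normal on $\Gamma_C$ equal to $e_1=(1,0)$. Let $\sigma(v)=\chi\,\mathrm{tr}(\epsilon(v))I+2\mu\epsilon(v)$ ($\chi,\mu>0$, $\epsilon(v)=\frac12(\nabla v+\nabla v^T)$), $a(w,v)=\int_\Omega\sigma(w):\epsilon(v)\,dx$, $L(v)=\int_\Omega f\cdot v\,dx+\int_{\Gamma_N}g\cdot v\,ds$, $f\in[L^2(\Omega)]^2$, $g\in[L^2(\Gamma_N)]^2$. Let $\mathcal{T}_h$ be a regular triangulation of $\Omega$ (each of $\Gamma_D,\Gamma_N,\Gamma_C$ a union of mesh edges); $\mathcal{V}_h,\mathcal{M}_h$ vertices and edge midpoints; $\mathcal{V}_h^C$ vertices in $\overline{\Gamma_C}$, $\mathcal{M}_h^C$ midpoints of edges on $\Gamma_C$; $\mathcal{V}_h^D,\mathcal{M}_h^D$ analogously for $\Gamma_D$; $\mathcal{V}_h^o=\mathcal{V}_h\setminus\mathcal{V}_h^D$, $\mathcal{M}_h^o=\mathcal{M}_h\setminus\mathcal{M}_h^D$.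 $V^h=\{v\in[C(\overline\Omega)]^2: v|_T\in[P_2(T)]^2,\ v=0\text{ on }\Gamma_D\}$ with scalar quadratic Lagrange basis $\psi_z$, $z\in\mathcal{V}_h^o\cup\mathcal{M}_h^o$. $\mathcal{K}^h=\{v^h=(v^h_1,v^h_2)\in V^h: v^h_1(z)\le0\ \forall z\in\mathcal{V}_h^C\cup\mathcal{M}_h^C\}$; $u^h=(u^h_1,u^h_2)\in\mathcal{K}^h$ solves $a(u^h,v^h-u^h)\ge L(v^h-u^h)$ $\forall v^h\in\mathcal{K}^h$. $Q^h$ = continuous $\mathbb{R}^2$-valued functions on $\overline{\Gamma_C}$ affine on each half of each contact edge (edges split at midpoints), scalar nodal basis $\phi_z$, $z\in\mathcal{V}_h^C\cup\mathcal{M}_h^C$. $\omega_z$ = union of elements sharing $z$, $\gamma_{z,C}=\partial\omega_z\cap\Gamma_C$. $\pi_h v=\sum_{z\in\mathcal{V}_h^C\cup\mathcal{M}_h^C}\sum_iv_i(z)\psi_ze_i$; $\langle w,v\rangle_h=\sum_{z\in\mathcal{V}_h^C\cup\mathcal{M}_h^C}w(z)\cdot v(z)\int_{\gamma_{z,C}}\phi_z\,ds$; $\lambda^h\in Q^h$ defined by $\langle\lambda^h,v^h\rangle_h=L(\pi_hv^h)-a(u^h,\pi_hv^h)$ for all $v^h\in Q^h$. *)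

theory Defs
  imports "HOL-Analysis.Analysis"
begin

type_synonym pt = "real^2"

definition lipschitz_domain :: "pt set \<Rightarrow> bool" where
  "lipschitz_domain \<Omega> \<longleftrightarrow> open \<Omega> \<and> bounded \<Omega> \<and> connected \<Omega> \<and> \<Omega> \<noteq> {} \<and>
     (\<forall>x\<in>frontier \<Omega>. \<exists>r>0. \<exists>R::pt \<Rightarrow> pt. \<exists>\<phi>::real \<Rightarrow> real. \<exists>K::real.
        orthogonal_transformation R \<and> (\<forall>s t. \<bar>\<phi> s - \<phi> t\<bar> \<le> K * \<bar>s - t\<bar>) \<and>
        ball x r \<inter> \<Omega> = {y \<in> ball x r. R (y - x) $ 2 < \<phi> (R (y - x) $ 1)})"

definition is_triangle :: "pt set \<Rightarrow> bool" where
  "is_triangle T \<longleftrightarrow> (\<exists>a b c. \<not> collinear {a, b, c} \<and> T = convex hull {a, b, c})"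

definition tri_verts :: "pt set \<Rightarrow> pt set" where
  "tri_verts T = {v. v extreme_point_of T}"

definition tri_edges :: "pt set \<Rightarrow> pt set set" where
  "tri_edges T = {closed_segment a b | a b. a \<in> tri_verts T \<and> b \<in> tri_verts T \<and> a \<noteq> b}"

definition mesh_verts :: "pt set set \<Rightarrow> pt set" where
  "mesh_verts \<T> = (\<Union>T\<in>\<T>. tri_verts T)"

definition mesh_edges :: "pt set set \<Rightarrow> pt set set" where
  "mesh_edges \<T> = (\<Union>T\<in>\<T>. tri_edges T)"

definition mesh_mids :: "pt set set \<Rightarrow> pt set" where
  "mesh_mids \<T> = {midpoint a b | a b. a \<noteq> b \<and> closed_segment a b \<in> mesh_edges \<T>}"

definition regular_triangulation :: "pt set \<Rightarrow> pt set set \<Rightarrow> bool" where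
  "regular_triangulation \<Omega> \<T> \<longleftrightarrow> finite \<T> \<and> (\<forall>T\<in>\<T>. is_triangle T) \<and>
     \<Union>\<T> = closure \<Omega> \<and>
     (\<forall>T\<in>\<T>. \<forall>T'\<in>\<T>. T \<noteq> T' \<longrightarrow>
        T \<inter> T' = {} \<or>
        (\<exists>v. v \<in> tri_verts T \<and> v \<in> tri_verts T' \<and> T \<inter> T' = {v}) \<or>
        (\<exists>e. e \<in> tri_edges T \<and> e \<in> tri_edges T' \<and> T \<inter> T' = e))"

definition bdry_edges :: "pt set \<Rightarrow> pt set set \<Rightarrow> pt set set" where
  "bdry_edges \<Omega> \<T> = {e \<in> mesh_edges \<T>. e \<subseteq> frontier \<Omega>}"

definition edge_ends :: "pt set \<Rightarrow> pt \<times> pt" where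
  "edge_ends e = (SOME (a, b). a \<noteq> b \<and> e = closed_segment a b)"

definition edge_param :: "pt set \<Rightarrow> real \<Rightarrow> pt" where
  "edge_param e t = (let (a, b) = edge_ends e in a + t *\<^sub>R (b - a))"

definition edge_len :: "pt set \<Rightarrow> real" where
  "edge_len e = (let (a, b) = edge_ends e in dist a b)"

definition edge_int :: "pt set \<Rightarrow> (pt \<Rightarrow> real) \<Rightarrow> real" where
  "edge_int e h = edge_len e * (LINT t|lebesgue_on {0..1}. h (edge_param e t))"

definition line_int :: "pt set \<Rightarrow> pt set set \<Rightarrow> pt set \<Rightarrow> (pt \<Rightarrow> real) \<Rightarrow> real" where
  "line_int \<Omega> \<T> S h = (\<Sum>e\<in>bdry_edges \<Omega> \<T>. edge_int e (\<lambda>x. indicator S x * h x))"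

definition bdry_meas :: "pt set \<Rightarrow> pt set set \<Rightarrow> pt set \<Rightarrow> real" where
  "bdry_meas \<Omega> \<T> S = line_int \<Omega> \<T> S (\<lambda>_. 1)"

definition setting :: "pt set \<Rightarrow> pt set set \<Rightarrow> pt set \<Rightarrow> pt set \<Rightarrow> pt set \<Rightarrow> bool" where
  "setting \<Omega> \<T> \<Gamma>D \<Gamma>N \<Gamma>C \<longleftrightarrow>
     lipschitz_domain \<Omega> \<and> regular_triangulation \<Omega> \<T> \<and>
     openin (top_of_set (frontier \<Omega>)) \<Gamma>D \<and>
     openin (top_of_set (frontier \<Omega>)) \<Gamma>N \<and>
     openin (top_of_set (frontier \<Omega>)) \<Gamma>C \<and>
     \<Gamma>D \<inter> \<Gamma>N = {} \<and> \<Gamma>D \<inter> \<Gamma>C = {} \<and> \<Gamma>N \<inter> \<Gamma>C = {} \<and>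
     frontier \<Omega> = closure \<Gamma>D \<union> closure \<Gamma>N \<union> closure \<Gamma>C \<and>
     bdry_meas \<Omega> \<T> \<Gamma>D > 0 \<and>
     closure \<Gamma>C \<subseteq> frontier \<Omega> - closure \<Gamma>D \<and>
     \<comment> \<open>outward unit normal on \<Gamma>C equals e1\<close>
     (\<forall>x\<in>\<Gamma>C. \<exists>r>0. ball x r \<inter> \<Omega> = {y \<in> ball x r. y $ 1 < x $ 1}) \<and>
     \<comment> \<open>each boundary part is a union of mesh edges\<close>
     (\<exists>E\<subseteq>mesh_edges \<T>. closure \<Gamma>D = \<Union>E) \<and>
     (\<exists>E\<subseteq>mesh_edges \<T>. closure \<Gamma>N = \<Union>E) \<and>
     (\<exists>E\<subseteq>mesh_edges \<T>. closure \<Gamma>C = \<Union>E)"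

definition contact_edges :: "pt set set \<Rightarrow> pt set \<Rightarrow> pt set set" where
  "contact_edges \<T> \<Gamma>C = {e \<in> mesh_edges \<T>. e \<subseteq> closure \<Gamma>C}"

definition contact_nodes :: "pt set set \<Rightarrow> pt set \<Rightarrow> pt set" where
  "contact_nodes \<T> \<Gamma>C = (mesh_verts \<T> \<inter> closure \<Gamma>C) \<union>
     {midpoint a b | a b. a \<noteq> b \<and> closed_segment a b \<in> contact_edges \<T> \<Gamma>C}"

definition half_edges :: "pt set set \<Rightarrow> pt set \<Rightarrow> pt set set" where
  "half_edges \<T> \<Gamma>C = {closed_segment a (midpoint a b) | a b.
      a \<noteq> b \<and> closed_segment a b \<in> contact_edges \<T> \<Gamma>C}"

definition quad_on :: "pt set \<Rightarrow> (pt \<Rightarrow> real) \<Rightarrow> bool" where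
  "quad_on T f \<longleftrightarrow> (\<exists>c0 c1 c2 c3 c4 c5. \<forall>x\<in>T.
     f x = c0 + c1 * x$1 + c2 * x$2 + c3 * (x$1)\<^sup>2 + c4 * (x$1 * x$2) + c5 * (x$2)\<^sup>2)"

definition aff_on :: "pt set \<Rightarrow> (pt \<Rightarrow> real) \<Rightarrow> bool" where
  "aff_on S f \<longleftrightarrow> (\<exists>c0 c1 c2. \<forall>x\<in>S. f x = c0 + c1 * x$1 + c2 * x$2)"

text \<open>The space V^h (values outside the closure of \<Omega> are irrelevant).\<close>
definition Vh :: "pt set \<Rightarrow> pt set set \<Rightarrow> pt set \<Rightarrow> (pt \<Rightarrow> pt) \<Rightarrow> bool" where
  "Vh \<Omega> \<T> \<Gamma>D v \<longleftrightarrow> continuous_on (closure \<Omega>) v \<and>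
     (\<forall>T\<in>\<T>. \<forall>i. quad_on T (\<lambda>x. v x $ i)) \<and> (\<forall>x\<in>\<Gamma>D. v x = 0)"

definition Kh :: "pt set \<Rightarrow> pt set set \<Rightarrow> pt set \<Rightarrow> pt set \<Rightarrow> (pt \<Rightarrow> pt) \<Rightarrow> bool" where
  "Kh \<Omega> \<T> \<Gamma>D \<Gamma>C v \<longleftrightarrow> Vh \<Omega> \<T> \<Gamma>D v \<and> (\<forall>z\<in>contact_nodes \<T> \<Gamma>C. v z $ 1 \<le> 0)"

definition psi :: "pt set \<Rightarrow> pt set set \<Rightarrow> pt \<Rightarrow> pt \<Rightarrow> real" where
  "psi \<Omega> \<T> z = (THE f. continuous_on (closure \<Omega>) f \<and> (\<forall>T\<in>\<T>. quad_on T f) \<and>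
      (\<forall>y\<in>mesh_verts \<T> \<union> mesh_mids \<T>. f y = (if y = z then 1 else 0)) \<and>
      (\<forall>x. x \<notin> closure \<Omega> \<longrightarrow> f x = 0))"

definition Qh :: "pt set set \<Rightarrow> pt set \<Rightarrow> (pt \<Rightarrow> pt) \<Rightarrow> bool" where
  "Qh \<T> \<Gamma>C w \<longleftrightarrow> continuous_on (closure \<Gamma>C) w \<and>
     (\<forall>S\<in>half_edges \<T> \<Gamma>C. \<forall>i. aff_on S (\<lambda>x. w x $ i))"

definition phi :: "pt set set \<Rightarrow> pt set \<Rightarrow> pt \<Rightarrow> pt \<Rightarrow> real" where
  "phi \<T> \<Gamma>C z = (THE f. continuous_on (closure \<Gamma>C) f \<and> (\<forall>S\<in>half_edges \<T> \<Gamma>C. aff_on S f) \<and>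
      (\<forall>y\<in>contact_nodes \<T> \<Gamma>C. f y = (if y = z then 1 else 0)) \<and>
      (\<forall>x. x \<notin> closure \<Gamma>C \<longrightarrow> f x = 0))"

definition omega :: "pt set set \<Rightarrow> pt \<Rightarrow> pt set" where
  "omega \<T> z = \<Union>{T \<in> \<T>. z \<in> T}"

definition gammaC :: "pt set set \<Rightarrow> pt set \<Rightarrow> pt \<Rightarrow> pt set" where
  "gammaC \<T> \<Gamma>C z = frontier (omega \<T> z) \<inter> \<Gamma>C"

definition pi_h :: "pt set \<Rightarrow> pt set set \<Rightarrow> pt set \<Rightarrow> (pt \<Rightarrow> pt) \<Rightarrow> pt \<Rightarrow> pt" where
  "pi_h \<Omega> \<T> \<Gamma>C v = (\<lambda>x. \<Sum>z\<in>contact_nodes \<T> \<Gamma>C. (\<Sum>i\<in>UNIV. (v z $ i * psi \<Omega> \<T> z x) *\<^sub>R axis i 1))"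

definition dpair :: "pt set \<Rightarrow> pt set set \<Rightarrow> pt set \<Rightarrow> (pt \<Rightarrow> pt) \<Rightarrow> (pt \<Rightarrow> pt) \<Rightarrow> real" where
  "dpair \<Omega> \<T> \<Gamma>C w v = (\<Sum>z\<in>contact_nodes \<T> \<Gamma>C.
      (w z \<bullet> v z) * line_int \<Omega> \<T> (gammaC \<T> \<Gamma>C z) (phi \<T> \<Gamma>C z))"

text \<open>Pointwise derivative (set to 0 where v is not differentiable; such points form a
  null set for piecewise polynomial v).\<close>
definition Dv :: "(pt \<Rightarrow> pt) \<Rightarrow> pt \<Rightarrow> pt \<Rightarrow> pt" where
  "Dv v x = (if v differentiable (at x) then frechet_derivative v (at x) else (\<lambda>_. 0))"

definition pd :: "(pt \<Rightarrow> pt) \<Rightarrow> 2 \<Rightarrow> 2 \<Rightarrow> pt \<Rightarrow> real" where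
  "pd v i j x = Dv v x (axis j 1) $ i"

definition strain :: "(pt \<Rightarrow> pt) \<Rightarrow> 2 \<Rightarrow> 2 \<Rightarrow> pt \<Rightarrow> real" where
  "strain v i j x = (pd v i j x + pd v j i x) / 2"

definition stress :: "real \<Rightarrow> real \<Rightarrow> (pt \<Rightarrow> pt) \<Rightarrow> 2 \<Rightarrow> 2 \<Rightarrow> pt \<Rightarrow> real" where
  "stress chi mu v i j x = chi * (strain v 1 1 x + strain v 2 2 x) * (if i = j then 1 else 0)
      + 2 * mu * strain v i j x"

definition aform :: "pt set \<Rightarrow> real \<Rightarrow> real \<Rightarrow> (pt \<Rightarrow> pt) \<Rightarrow> (pt \<Rightarrow> pt) \<Rightarrow> real" where
  "aform \<Omega> chi mu w v = (LINT x|lebesgue_on \<Omega>.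
      (\<Sum>i\<in>UNIV. (\<Sum>j\<in>UNIV. stress chi mu w i j x * strain v i j x)))"

definition Lform :: "pt set \<Rightarrow> pt set set \<Rightarrow> pt set \<Rightarrow> (pt \<Rightarrow> pt) \<Rightarrow> (pt \<Rightarrow> pt) \<Rightarrow> (pt \<Rightarrow> pt) \<Rightarrow> real" where
  "Lform \<Omega> \<T> \<Gamma>N f g v = (LINT x|lebesgue_on \<Omega>. f x \<bullet> v x) + line_int \<Omega> \<T> \<Gamma>N (\<lambda>x. g x \<bullet> v x)"

definition L2_dom :: "pt set \<Rightarrow> (pt \<Rightarrow> pt) \<Rightarrow> bool" where
  "L2_dom \<Omega> f \<longleftrightarrow> f \<in> borel_measurable (lebesgue_on \<Omega>) \<and>
     integrable (lebesgue_on \<Omega>) (\<lambda>x. (norm (f x))\<^sup>2)"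

definition L2_bdry :: "pt set \<Rightarrow> pt set set \<Rightarrow> pt set \<Rightarrow> (pt \<Rightarrow> pt) \<Rightarrow> bool" where
  "L2_bdry \<Omega> \<T> \<Gamma> g \<longleftrightarrow> (\<forall>e\<in>bdry_edges \<Omega> \<T>. e \<subseteq> closure \<Gamma> \<longrightarrow>
     (\<lambda>t. g (edge_param e t)) \<in> borel_measurable (lebesgue_on {0..1}) \<and>
     integrable (lebesgue_on {0..1}) (\<lambda>t. (norm (g (edge_param e t)))\<^sup>2))"

end

theory Submission
  imports Defs
begin

(* Since u_1(p) < 0 and u_1 <= 0 at all contact nodes, both u + eps psi_p e_1 and
   u - eps psi_p e_1 with eps = -u_1(p) lie in K^h: psi_p vanishes at every other node and,
   p not lying on the closure of Gamma_D, on Gamma_D. Testing the variational inequality with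
   both gives a(u, psi_p e_1) = L(psi_p e_1). As phi_p is nodal, pi_h (phi_p e_1) = psi_p e_1,
   so the defining identity of lambda^h yields <lambda^h, phi_p e_1>_h = 0.
   Most of the work is to show that psi_p and phi_p, defined by THE, exist and are unique:
   local Lagrange interpolants on the triangles, resp. on the halves of the contact edges, are
   glued together, consistently because two triangles of a conforming mesh meet in a common
   face, and are unique by unisolvence of the nodal values. *)

section \<open>Quadratic and affine polynomials on the plane\<close>

definition quad_poly :: "(pt \<Rightarrow> real) \<Rightarrow> bool" where
  "quad_poly P \<longleftrightarrow> (\<exists>c0 c1 c2 c3 c4 c5. \<forall>x.
     P x = c0 + c1 * x$1 + c2 * x$2 + c3 * (x$1)\<^sup>2 + c4 * (x$1 * x$2) + c5 * (x$2)\<^sup>2)"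

definition aff_poly :: "(pt \<Rightarrow> real) \<Rightarrow> bool" where
  "aff_poly A \<longleftrightarrow> (\<exists>c0 c1 c2. \<forall>x. A x = c0 + c1 * x$1 + c2 * x$2)"

lemma quad_on_iff_quad_poly: "quad_on T f \<longleftrightarrow> (\<exists>P. quad_poly P \<and> (\<forall>x\<in>T. f x = P x))"
proof
  assume "quad_on T f"
  then obtain c0 c1 c2 c3 c4 c5 where
    "\<forall>x\<in>T. f x = c0 + c1 * x$1 + c2 * x$2 + c3 * (x$1)\<^sup>2 + c4 * (x$1 * x$2) + c5 * (x$2)\<^sup>2"
    unfolding quad_on_def by metis
  moreover have "quad_poly (\<lambda>x. c0 + c1 * x$1 + c2 * x$2 + c3 * (x$1)\<^sup>2 + c4 * (x$1 * x$2) + c5 * (x$2)\<^sup>2)"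
    unfolding quad_poly_def by blast
  ultimately show "\<exists>P. quad_poly P \<and> (\<forall>x\<in>T. f x = P x)" by blast
next
  assume "\<exists>P. quad_poly P \<and> (\<forall>x\<in>T. f x = P x)"
  then show "quad_on T f" unfolding quad_on_def quad_poly_def by fastforce
qed

lemma aff_on_iff_aff_poly: "aff_on S f \<longleftrightarrow> (\<exists>A. aff_poly A \<and> (\<forall>x\<in>S. f x = A x))"
proof
  assume "aff_on S f"
  then obtain c0 c1 c2 where "\<forall>x\<in>S. f x = c0 + c1 * x$1 + c2 * x$2"
    unfolding aff_on_def by metis
  moreover have "aff_poly (\<lambda>x. c0 + c1 * x$1 + c2 * x$2)" unfolding aff_poly_def by blast
  ultimately show "\<exists>A. aff_poly A \<and> (\<forall>x\<in>S. f x = A x)" by blast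
next
  assume "\<exists>A. aff_poly A \<and> (\<forall>x\<in>S. f x = A x)"
  then show "aff_on S f" unfolding aff_on_def aff_poly_def by fastforce
qed

lemma quad_poly_add: "quad_poly P \<Longrightarrow> quad_poly Q \<Longrightarrow> quad_poly (\<lambda>x. P x + Q x)"
proof -
  assume "quad_poly P" "quad_poly Q"
  then obtain a0 a1 a2 a3 a4 a5 b0 b1 b2 b3 b4 b5 where
    "\<forall>x. P x = a0 + a1 * x$1 + a2 * x$2 + a3 * (x$1)\<^sup>2 + a4 * (x$1 * x$2) + a5 * (x$2)\<^sup>2"
    "\<forall>x. Q x = b0 + b1 * x$1 + b2 * x$2 + b3 * (x$1)\<^sup>2 + b4 * (x$1 * x$2) + b5 * (x$2)\<^sup>2"
    unfolding quad_poly_def by metis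
  then show ?thesis unfolding quad_poly_def
    by (intro exI[of _ "a0+b0"] exI[of _ "a1+b1"] exI[of _ "a2+b2"] exI[of _ "a3+b3"]
        exI[of _ "a4+b4"] exI[of _ "a5+b5"]) (simp add: algebra_simps)
qed

lemma quad_poly_scale: "quad_poly P \<Longrightarrow> quad_poly (\<lambda>x. k * P x)"
proof -
  assume "quad_poly P"
  then obtain a0 a1 a2 a3 a4 a5 where
    "\<forall>x. P x = a0 + a1 * x$1 + a2 * x$2 + a3 * (x$1)\<^sup>2 + a4 * (x$1 * x$2) + a5 * (x$2)\<^sup>2"
    unfolding quad_poly_def by metis
  then show ?thesis unfolding quad_poly_def
    by (intro exI[of _ "k*a0"] exI[of _ "k*a1"] exI[of _ "k*a2"] exI[of _ "k*a3"]
        exI[of _ "k*a4"] exI[of _ "k*a5"]) (simp add: algebra_simps)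
qed

lemma quad_poly_diff: "quad_poly P \<Longrightarrow> quad_poly Q \<Longrightarrow> quad_poly (\<lambda>x. P x - Q x)"
  using quad_poly_add[of P "\<lambda>x. (-1) * Q x"] quad_poly_scale[of Q "-1"] by simp

lemma quad_poly_mult_aff: "aff_poly A \<Longrightarrow> aff_poly B \<Longrightarrow> quad_poly (\<lambda>x. A x * B x)"
proof -
  assume "aff_poly A" "aff_poly B"
  then obtain a0 a1 a2 b0 b1 b2 where
    "\<forall>x. A x = a0 + a1 * x$1 + a2 * x$2" "\<forall>x. B x = b0 + b1 * x$1 + b2 * x$2"
    unfolding aff_poly_def by metis
  then show ?thesis unfolding quad_poly_def
    by (intro exI[of _ "a0*b0"] exI[of _ "a0*b1+a1*b0"] exI[of _ "a0*b2+a2*b0"] exI[of _ "a1*b1"]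
        exI[of _ "a1*b2+a2*b1"] exI[of _ "a2*b2"]) (simp add: algebra_simps power2_eq_square)
qed

lemma aff_poly_const: "aff_poly (\<lambda>x. k)"
  unfolding aff_poly_def by (intro exI[of _ k] exI[of _ 0]) simp

lemma aff_poly_imp_quad_poly: "aff_poly A \<Longrightarrow> quad_poly A"
  using quad_poly_mult_aff[of A "\<lambda>x. 1"] aff_poly_const[of 1] by simp

lemma aff_poly_add: "aff_poly A \<Longrightarrow> aff_poly B \<Longrightarrow> aff_poly (\<lambda>x. A x + B x)"
proof -
  assume "aff_poly A" "aff_poly B"
  then obtain a0 a1 a2 b0 b1 b2 where
    "\<forall>x. A x = a0 + a1 * x$1 + a2 * x$2" "\<forall>x. B x = b0 + b1 * x$1 + b2 * x$2"
    unfolding aff_poly_def by metis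
  then show ?thesis unfolding aff_poly_def
    by (intro exI[of _ "a0+b0"] exI[of _ "a1+b1"] exI[of _ "a2+b2"]) (simp add: algebra_simps)
qed

lemma aff_poly_scale: "aff_poly A \<Longrightarrow> aff_poly (\<lambda>x. k * A x)"
proof -
  assume "aff_poly A"
  then obtain a0 a1 a2 where "\<forall>x. A x = a0 + a1 * x$1 + a2 * x$2"
    unfolding aff_poly_def by metis
  then show ?thesis unfolding aff_poly_def
    by (intro exI[of _ "k*a0"] exI[of _ "k*a1"] exI[of _ "k*a2"]) (simp add: algebra_simps)
qed

lemma aff_poly_inner: "aff_poly (\<lambda>x. (x - a) \<bullet> w)"
  unfolding aff_poly_def inner_vec_def sum_2
  by (intro exI[of _ "- a$1 * w$1 - a$2 * w$2"] exI[of _ "w$1"] exI[of _ "w$2"]) (simp add: algebra_simps)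

lemma aff_poly_midpoint: "aff_poly A \<Longrightarrow> A (midpoint a b) = (A a + A b) / 2"
  unfolding aff_poly_def midpoint_def by (auto simp: algebra_simps)

lemma aff_poly_along_line: "aff_poly A \<Longrightarrow> A (a + t *\<^sub>R (b - a)) = A a + t * (A b - A a)"
  unfolding aff_poly_def by (auto simp: algebra_simps)

lemma closed_segment_param: "x \<in> closed_segment a b \<longleftrightarrow> (\<exists>t. 0 \<le> t \<and> t \<le> 1 \<and> x = a + t *\<^sub>R (b - a))"
  unfolding closed_segment_def by (auto simp: algebra_simps)

lemma aff_poly_eq_on_segment:
  assumes "aff_poly A" "aff_poly B" "A a = B a" "A b = B b" "x \<in> closed_segment a b"
  shows "A x = B x"
proof -
  obtain t where "x = a + t *\<^sub>R (b - a)" using assms(5) closed_segment_param by metis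
  then show ?thesis using aff_poly_along_line[OF assms(1)] aff_poly_along_line[OF assms(2)] assms(3,4)
    by simp
qed

lemma aff_poly_interpolates_two_points:
  assumes "a \<noteq> b"
  shows "\<exists>A. aff_poly A \<and> A a = \<alpha> \<and> A b = \<beta>"
proof -
  define A where "A x = \<alpha> + (\<beta> - \<alpha>) * ((1 / ((b - a) \<bullet> (b - a))) * ((x - a) \<bullet> (b - a)))" for x
  have "aff_poly A"
    unfolding A_def by (intro aff_poly_add aff_poly_const aff_poly_scale aff_poly_inner)
  moreover have "A a = \<alpha>" "A b = \<beta>" using assms by (simp_all add: A_def)
  ultimately show ?thesis by blast
qed

lemma quad_poly_continuous_on: "quad_poly P \<Longrightarrow> continuous_on S P"
proof -
  assume "quad_poly P"
  then obtain c0 c1 c2 c3 c4 c5 where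
    "P = (\<lambda>x. c0 + c1 * x$1 + c2 * x$2 + c3 * (x$1)\<^sup>2 + c4 * (x$1 * x$2) + c5 * (x$2)\<^sup>2)"
    unfolding quad_poly_def by blast
  then show ?thesis by (simp add: continuous_intros)
qed

lemma quad_poly_along_plane:
  assumes "quad_poly P"
  shows "\<exists>d0 d1 d2 d3 d4 d5. \<forall>s t. P (a + s *\<^sub>R u + t *\<^sub>R w) =
    d0 + d1 * s + d2 * t + d3 * s\<^sup>2 + d4 * (s * t) + d5 * t\<^sup>2"
proof -
  obtain c0 c1 c2 c3 c4 c5 where c:
    "\<forall>x. P x = c0 + c1 * x$1 + c2 * x$2 + c3 * (x$1)\<^sup>2 + c4 * (x$1 * x$2) + c5 * (x$2)\<^sup>2"
    using assms unfolding quad_poly_def by metis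
  show ?thesis
    by (rule exI[of _ "P a"],
        rule exI[of _ "c1*u$1 + c2*u$2 + 2*c3*a$1*u$1 + c4*(a$1*u$2 + u$1*a$2) + 2*c5*a$2*u$2"],
        rule exI[of _ "c1*w$1 + c2*w$2 + 2*c3*a$1*w$1 + c4*(a$1*w$2 + w$1*a$2) + 2*c5*a$2*w$2"],
        rule exI[of _ "c3*u$1*u$1 + c4*u$1*u$2 + c5*u$2*u$2"],
        rule exI[of _ "2*c3*u$1*w$1 + c4*(u$1*w$2 + w$1*u$2) + 2*c5*u$2*w$2"],
        rule exI[of _ "c3*w$1*w$1 + c4*w$1*w$2 + c5*w$2*w$2"])
      (simp add: c algebra_simps power2_eq_square)
qed

lemma quad_poly_zero_on_segment:
  assumes "quad_poly P" "P a = 0" "P b = 0" "P (midpoint a b) = 0" "x \<in> closed_segment a b"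
  shows "P x = 0"
proof -
  obtain d0 d1 d2 d3 d4 d5 where d: "\<And>s t. P (a + s *\<^sub>R (b - a) + t *\<^sub>R 0) =
      d0 + d1 * s + d2 * t + d3 * s\<^sup>2 + d4 * (s * t) + d5 * t\<^sup>2"
    using quad_poly_along_plane[OF assms(1)] by blast
  have line: "P (a + s *\<^sub>R (b - a)) = d0 + d1 * s + d3 * s\<^sup>2" for s
    using d[of s 0] by simp
  have "midpoint a b = a + (1/2) *\<^sub>R (b - a)"
    by (simp add: midpoint_def vec_eq_iff field_simps)
  then have "d0 + d1/2 + d3/4 = 0" using line[of "1/2"] assms(4) by (simp add: power2_eq_square)
  moreover have "d0 = 0" "d0 + d1 + d3 = 0" using line[of 0] line[of 1] assms(2,3) by simp_all
  ultimately have "d0 = 0" "d1 = 0" "d3 = 0" by linarith+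
  moreover obtain t where "x = a + t *\<^sub>R (b - a)" using assms(5) closed_segment_param by metis
  ultimately show ?thesis using line[of t] by simp
qed

lemma parallel_if_det_zero:
  fixes p q :: pt
  assumes "p$1 * q$2 - p$2 * q$1 = 0" and "p \<noteq> 0"
  shows "\<exists>k. q = k *\<^sub>R p"
proof (cases "p$1 = 0")
  case False
  then have "q = (q$1 / p$1) *\<^sub>R p"
    using assms(1) unfolding vec_eq_iff forall_2 by (simp add: field_simps)
  then show ?thesis by blast
next
  case True
  then have "p$2 \<noteq> 0" using assms(2) unfolding vec_eq_iff forall_2 by simp
  then have "q = (q$2 / p$2) *\<^sub>R p"
    using assms(1) True unfolding vec_eq_iff forall_2 by (simp add: field_simps)
  then show ?thesis by blast
qed

lemma noncollinear_det_nonzero: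
  assumes "\<not> collinear {a, b, c :: pt}"
  shows "(a - b)$1 * (c - b)$2 - (a - b)$2 * (c - b)$1 \<noteq> 0"
proof
  assume "(a - b)$1 * (c - b)$2 - (a - b)$2 * (c - b)$1 = 0"
  then have "a - b = 0 \<or> (\<exists>k. c - b = k *\<^sub>R (a - b))"
    using parallel_if_det_zero by blast
  then have "collinear {0, a - b, c - b}" by (auto simp: collinear_lemma)
  then show False using assms collinear_3[of a b c] by simp
qed

lemma barycentric_coordinate:
  assumes "\<not> collinear {a, b, c :: pt}"
  shows "\<exists>L. aff_poly L \<and> L a = 1 \<and> L b = 0 \<and> L c = 0"
proof -
  define D where "D = (a - b)$1 * (c - b)$2 - (a - b)$2 * (c - b)$1"
  define L where "L x = (1 / D) * ((x - b)$1 * (c - b)$2 - (x - b)$2 * (c - b)$1)" for x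
  have "aff_poly L" unfolding L_def aff_poly_def
    by (intro exI[of _ "(1/D) * (- b$1 * (c - b)$2 + b$2 * (c - b)$1)"] exI[of _ "(1/D) * (c - b)$2"]
      exI[of _ "- (1/D) * (c - b)$1"]) (simp add: algebra_simps)
  moreover have "L a = 1" using noncollinear_det_nonzero[OF assms] by (simp add: L_def D_def)
  moreover have "L b = 0" "L c = 0" by (simp_all add: L_def algebra_simps)
  ultimately show ?thesis by blast
qed

lemma quad_poly_interpolates_triangle_nodes:
  assumes nc: "\<not> collinear {a, b, c :: pt}"
  shows "\<exists>P. quad_poly P \<and> (\<forall>y\<in>{a, b, c, midpoint a b, midpoint b c, midpoint a c}. P y = \<delta> y)"
proof -
  obtain La where La: "aff_poly La" "La a = 1" "La b = 0" "La c = 0"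
    using barycentric_coordinate[OF nc] by blast
  obtain Lb where Lb: "aff_poly Lb" "Lb b = 1" "Lb c = 0" "Lb a = 0"
    using barycentric_coordinate[of b c a] nc by (auto simp: insert_commute)
  obtain Lc where Lc: "aff_poly Lc" "Lc c = 1" "Lc a = 0" "Lc b = 0"
    using barycentric_coordinate[of c a b] nc by (auto simp: insert_commute)
  \<comment> \<open>the standard quadratic Lagrange basis in barycentric coordinates\<close>
  define P where "P x = \<delta> a * (2 * (La x * La x) - La x) + \<delta> b * (2 * (Lb x * Lb x) - Lb x)
     + \<delta> c * (2 * (Lc x * Lc x) - Lc x) + 4 * \<delta> (midpoint a b) * (La x * Lb x)
     + 4 * \<delta> (midpoint b c) * (Lb x * Lc x) + 4 * \<delta> (midpoint a c) * (La x * Lc x)" for x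
  have vertex_basis: "quad_poly (\<lambda>x. 2 * (L x * L x) - L x)" if "aff_poly L" for L
    using that by (intro quad_poly_diff quad_poly_scale quad_poly_mult_aff aff_poly_imp_quad_poly)
  have "quad_poly P" unfolding P_def
    by (intro quad_poly_add quad_poly_scale vertex_basis quad_poly_mult_aff La Lb Lc)
  moreover
  have mid_values: "La (midpoint a b) = 1/2" "Lb (midpoint a b) = 1/2" "Lc (midpoint a b) = 0"
       "La (midpoint b c) = 0" "Lb (midpoint b c) = 1/2" "Lc (midpoint b c) = 1/2"
       "La (midpoint a c) = 1/2" "Lb (midpoint a c) = 0" "Lc (midpoint a c) = 1/2"
    by (simp_all add: La Lb Lc aff_poly_midpoint[OF La(1)] aff_poly_midpoint[OF Lb(1)]
        aff_poly_midpoint[OF Lc(1)])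
  have "P a = \<delta> a" "P b = \<delta> b" "P c = \<delta> c" "P (midpoint a b) = \<delta> (midpoint a b)"
    "P (midpoint b c) = \<delta> (midpoint b c)" "P (midpoint a c) = \<delta> (midpoint a c)"
    unfolding P_def mid_values La(2-4) Lb(2-4) Lc(2-4) by simp_all
  then have "\<forall>y\<in>{a, b, c, midpoint a b, midpoint b c, midpoint a c}. P y = \<delta> y" by simp
  ultimately show ?thesis by blast
qed

lemma quad_poly_unisolvent_triangle:
  assumes "\<not> collinear {a, b, c :: pt}" and "quad_poly P"
    and zero: "\<forall>y\<in>{a, b, c, midpoint a b, midpoint b c, midpoint a c}. P y = 0"
    and x: "x \<in> convex hull {a, b, c}"
  shows "P x = 0"
proof -
  obtain d0 d1 d2 d3 d4 d5 where d: "\<And>s t. P (a + s *\<^sub>R (b - a) + t *\<^sub>R (c - a)) =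
      d0 + d1 * s + d2 * t + d3 * s\<^sup>2 + d4 * (s * t) + d5 * t\<^sup>2"
    using quad_poly_along_plane[OF assms(2)] by blast
  have m: "midpoint a b = a + (1/2) *\<^sub>R (b - a) + 0 *\<^sub>R (c - a)"
    "midpoint a c = a + 0 *\<^sub>R (b - a) + (1/2) *\<^sub>R (c - a)"
    "midpoint b c = a + (1/2) *\<^sub>R (b - a) + (1/2) *\<^sub>R (c - a)"
    by (simp_all add: midpoint_def vec_eq_iff field_simps)
  have "P a = d0" "P b = d0 + d1 + d3" "P c = d0 + d2 + d5"
    using d[of 0 0] d[of 1 0] d[of 0 1] by simp_all
  moreover have "P (midpoint a b) = d0 + d1/2 + d3/4" "P (midpoint a c) = d0 + d2/2 + d5/4"
    "P (midpoint b c) = d0 + d1/2 + d2/2 + d3/4 + d4/4 + d5/4"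
    unfolding m d by (simp_all add: power2_eq_square)
  ultimately have "d0 = 0" "d0 + d1 + d3 = 0" "d0 + d2 + d5 = 0" "d0 + d1/2 + d3/4 = 0"
    "d0 + d2/2 + d5/4 = 0" "d0 + d1/2 + d2/2 + d3/4 + d4/4 + d5/4 = 0"
    using zero by simp_all
  then have "d0 = 0" "d1 = 0" "d2 = 0" "d3 = 0" "d4 = 0" "d5 = 0" by linarith+
  moreover obtain u v w where "x = u *\<^sub>R a + v *\<^sub>R b + w *\<^sub>R c" "u + v + w = 1"
    using x unfolding convex_hull_3 by blast
  then have "x = a + v *\<^sub>R (b - a) + w *\<^sub>R (c - a)"
    by (simp add: algebra_simps flip: scaleR_add_left)
  ultimately show ?thesis using d[of v w] by simp
qed

section \<open>Faces of a conforming triangulation\<close>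

lemma mesh_Union: "regular_triangulation \<Omega> \<T> \<Longrightarrow> \<Union>\<T> = closure \<Omega>"
  unfolding regular_triangulation_def by (elim conjE)

lemma finite_mesh: "regular_triangulation \<Omega> \<T> \<Longrightarrow> finite \<T>"
  unfolding regular_triangulation_def by (elim conjE)

lemma mesh_triangle:
  assumes "regular_triangulation \<Omega> \<T>" "T \<in> \<T>"
  obtains a b c where "\<not> collinear {a, b, c}" "T = convex hull {a, b, c}" "tri_verts T = {a, b, c}"
proof -
  have "\<forall>T\<in>\<T>. is_triangle T" using assms(1) unfolding regular_triangulation_def by (elim conjE)
  then have "is_triangle T" using assms(2) by blast
  then obtain a b c where abc: "\<not> collinear {a, b, c}" "T = convex hull {a, b, c}"
    unfolding is_triangle_def by blast
  then have "\<not> affine_dependent {a, b, c}" using collinear_3_eq_affine_dependent by blast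
  then have "tri_verts T = {a, b, c}"
    unfolding tri_verts_def abc(2) by (auto simp: extreme_point_of_convex_hull_affine_independent)
  with abc that show thesis by blast
qed

lemma tri_vertex_in_triangle: "v \<in> tri_verts T \<Longrightarrow> v \<in> T"
  unfolding tri_verts_def extreme_point_of_def by blast

lemma tri_vertex_face_of: "v \<in> tri_verts T \<Longrightarrow> {v} face_of T"
  by (simp add: tri_verts_def face_of_singleton)

lemma tri_segment_face_of:
  assumes "regular_triangulation \<Omega> \<T>" "T \<in> \<T>" "v \<in> tri_verts T" "w \<in> tri_verts T"
  shows "closed_segment v w face_of T"
proof -
  obtain a b c where abc: "\<not> collinear {a, b, c}" "T = convex hull {a, b, c}" "tri_verts T = {a, b, c}"
    using mesh_triangle[OF assms(1,2)] .
  then have "\<not> affine_dependent {a, b, c}" using collinear_3_eq_affine_dependent by blast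
  moreover have "{v, w} \<subseteq> {a, b, c}" using assms(3,4) abc(3) by blast
  ultimately show ?thesis unfolding segment_convex_hull abc(2)
    using face_of_convex_hull_affine_independent[of "{a, b, c}" "convex hull {v, w}"] by blast
qed

lemma tri_segment_subset:
  assumes "regular_triangulation \<Omega> \<T>" "T \<in> \<T>" "v \<in> tri_verts T" "w \<in> tri_verts T"
  shows "closed_segment v w \<subseteq> T"
  using tri_segment_face_of[OF assms] face_of_imp_subset by blast

lemma mesh_edge_tri_verts:
  assumes "closed_segment a b \<in> mesh_edges \<T>"
  shows "a \<noteq> b \<and> (\<exists>T\<in>\<T>. a \<in> tri_verts T \<and> b \<in> tri_verts T)"
proof -
  obtain T v w where "T \<in> \<T>" "v \<in> tri_verts T" "w \<in> tri_verts T" "v \<noteq> w"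
      "closed_segment a b = closed_segment v w"
    using assms unfolding mesh_edges_def tri_edges_def by blast
  moreover from this have "{a, b} = {v, w}" by simp
  ultimately show ?thesis by (metis doubleton_eq_iff)
qed

lemma mesh_edge_face_of:
  assumes "regular_triangulation \<Omega> \<T>" "closed_segment a b \<in> mesh_edges \<T>"
  obtains T where "T \<in> \<T>" "closed_segment a b face_of T"
  using mesh_edge_tri_verts[OF assms(2)] tri_segment_face_of[OF assms(1)] by blast

lemma mesh_conforming:
  assumes "regular_triangulation \<Omega> \<T>" "T \<in> \<T>" "T' \<in> \<T>" "T \<noteq> T'"
  shows "T \<inter> T' = {} \<or> (\<exists>v. v \<in> tri_verts T \<and> v \<in> tri_verts T' \<and> T \<inter> T' = {v}) \<or>
    (\<exists>e. e \<in> tri_edges T \<and> e \<in> tri_edges T' \<and> T \<inter> T' = e)"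
  using assms unfolding regular_triangulation_def by (elim conjE) blast

lemma mesh_Int_face_of:
  assumes RT: "regular_triangulation \<Omega> \<T>" and T: "T \<in> \<T>" "T' \<in> \<T>"
  shows "(T \<inter> T') face_of T"
proof (cases "T = T'")
  case True
  obtain a b c where "T = convex hull {a, b, c}" using mesh_triangle[OF RT T(1)] .
  then show ?thesis using True by (simp add: face_of_refl)
next
  case False
  then consider "T \<inter> T' = {}"
    | v where "v \<in> tri_verts T" "T \<inter> T' = {v}"
    | e where "e \<in> tri_edges T" "T \<inter> T' = e"
    using mesh_conforming[OF RT T False] by blast
  then show ?thesis
  proof cases
    case 2
    then show ?thesis by (simp add: tri_vertex_face_of)
  next
    case 3
    then obtain v w where "v \<in> tri_verts T" "w \<in> tri_verts T" "T \<inter> T' = closed_segment v w"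
      unfolding tri_edges_def by blast
    then show ?thesis using tri_segment_face_of[OF RT T(1)] by simp
  qed simp
qed

lemma mesh_faces_Int_face_of:
  assumes "regular_triangulation \<Omega> \<T>" "T \<in> \<T>" "T' \<in> \<T>" "F face_of T" "F' face_of T'"
  shows "(F \<inter> F') face_of F"
  using face_of_Int_subface[OF mesh_Int_face_of[OF assms(1-3)] _ assms(4,5)]
    mesh_Int_face_of[OF assms(1) assms(3,2)] by (simp add: Int_commute)

lemma segment_face_cases:
  fixes a b :: "'a::euclidean_space"
  assumes "F face_of closed_segment a b"
  shows "F = {} \<or> F = {a} \<or> F = {b} \<or> F = closed_segment a b"
proof -
  have "F face_of convex hull {a, b}" using assms by (simp add: segment_convex_hull)
  then obtain c where "c \<subseteq> {a, b}" "F = convex hull c"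
    using face_of_convex_hull_affine_independent[of "{a, b}" F] by auto
  moreover have "c = {} \<or> c = {a} \<or> c = {b} \<or> c = {a, b}" using \<open>c \<subseteq> {a, b}\<close> by blast
  ultimately show ?thesis by (metis convex_hull_empty convex_hull_singleton segment_convex_hull)
qed

lemma mesh_edges_meet:
  assumes RT: "regular_triangulation \<Omega> \<T>"
    and ab: "closed_segment a b \<in> mesh_edges \<T>" and cd: "closed_segment c d \<in> mesh_edges \<T>"
    and z: "z \<in> closed_segment a b" "z \<in> closed_segment c d"
  shows "{a, b} = {c, d} \<or> (z \<in> {a, b} \<and> z \<in> {c, d})"
proof -
  have "a \<noteq> b" "c \<noteq> d" using mesh_edge_tri_verts ab cd by blast+
  obtain T where T: "T \<in> \<T>" "closed_segment a b face_of T" using mesh_edge_face_of[OF RT ab] .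
  obtain T' where T': "T' \<in> \<T>" "closed_segment c d face_of T'" using mesh_edge_face_of[OF RT cd] .
  define G where "G = closed_segment a b \<inter> closed_segment c d"
  have "G face_of closed_segment a b" "G face_of closed_segment c d"
    using mesh_faces_Int_face_of[OF RT T(1) T'(1) T(2) T'(2)]
      mesh_faces_Int_face_of[OF RT T'(1) T(1) T'(2) T(2)] by (simp_all add: G_def Int_commute)
  moreover have "z \<in> G" using z by (simp add: G_def)
  ultimately have G1: "G = {a} \<or> G = {b} \<or> G = closed_segment a b"
    and G2: "G = {c} \<or> G = {d} \<or> G = closed_segment c d"
    using segment_face_cases by (metis empty_iff)+
  from G1 show ?thesis
  proof (elim disjE)
    assume "G = closed_segment a b"
    with G2 \<open>a \<noteq> b\<close> have "closed_segment a b = closed_segment c d"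
      by (metis closed_segment_eq_sing)
    then show ?thesis by simp
  qed (use G2 \<open>z \<in> G\<close> \<open>c \<noteq> d\<close> in \<open>metis closed_segment_eq_sing insertCI singletonD\<close>)+
qed

lemma mesh_vertex_on_edge:
  assumes RT: "regular_triangulation \<Omega> \<T>"
    and v: "v \<in> mesh_verts \<T>" and ab: "closed_segment a b \<in> mesh_edges \<T>"
    and "v \<in> closed_segment a b"
  shows "v \<in> {a, b}"
proof -
  obtain T' where T': "T' \<in> \<T>" "v \<in> tri_verts T'" using v unfolding mesh_verts_def by blast
  obtain T where T: "T \<in> \<T>" "closed_segment a b face_of T" using mesh_edge_face_of[OF RT ab] .
  have "(closed_segment a b \<inter> {v}) face_of closed_segment a b"
    using mesh_faces_Int_face_of[OF RT T(1) T'(1) T(2) tri_vertex_face_of[OF T'(2)]] .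
  moreover have "closed_segment a b \<inter> {v} = {v}" using assms(4) by blast
  ultimately have "{v} = {a} \<or> {v} = {b} \<or> closed_segment a b = {v}"
    using segment_face_cases by (metis insert_not_empty)
  then show ?thesis by (auto simp: closed_segment_eq_sing)
qed

lemma mesh_node_on_edge:
  assumes RT: "regular_triangulation \<Omega> \<T>"
    and y: "y \<in> mesh_verts \<T> \<union> mesh_mids \<T>"
    and ab: "closed_segment a b \<in> mesh_edges \<T>" and "y \<in> closed_segment a b"
  shows "y \<in> {a, b, midpoint a b}"
  using y
proof
  assume "y \<in> mesh_verts \<T>"
  then show ?thesis using mesh_vertex_on_edge[OF RT _ ab] assms(4) by blast
next
  assume "y \<in> mesh_mids \<T>"
  then obtain c d where cd: "y = midpoint c d" "c \<noteq> d" "closed_segment c d \<in> mesh_edges \<T>"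
    unfolding mesh_mids_def by blast
  then have "{a, b} = {c, d} \<or> (y \<in> {a, b} \<and> y \<in> {c, d})"
    using mesh_edges_meet[OF RT ab cd(3) assms(4)] midpoint_in_closed_segment by blast
  then show ?thesis using cd(1,2) by (auto simp: doubleton_eq_iff midpoint_sym)
qed

lemma finite_mesh_verts:
  assumes "regular_triangulation \<Omega> \<T>"
  shows "finite (mesh_verts \<T>)"
  unfolding mesh_verts_def
proof (rule finite_UN_I)
  show "finite \<T>" using finite_mesh[OF assms] .
  show "finite (tri_verts T)" if "T \<in> \<T>" for T
    using mesh_triangle[OF assms that] by (metis finite.emptyI finite.insertI)
qed

section \<open>Global quadratic Lagrange basis functions\<close>

definition tri_nodes :: "pt set \<Rightarrow> pt set" where
  "tri_nodes T = tri_verts T \<union> {midpoint v w | v w. v \<in> tri_verts T \<and> w \<in> tri_verts T \<and> v \<noteq> w}"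

lemma noncollinear_imp_distinct:
  assumes "\<not> collinear {a, b, c}"
  shows "a \<noteq> b" "b \<noteq> c" "a \<noteq> c"
proof -
  have "a = b \<or> b = c \<or> a = c \<Longrightarrow> \<exists>x y. {a, b, c} = {x, y}" by blast
  then show "a \<noteq> b" "b \<noteq> c" "a \<noteq> c" using assms collinear_2 by metis+
qed

lemma tri_nodes_triangle:
  assumes "\<not> collinear {a, b, c}" "tri_verts T = {a, b, c}"
  shows "tri_nodes T = {a, b, c, midpoint a b, midpoint b c, midpoint a c}"
  using noncollinear_imp_distinct[OF assms(1)]
  unfolding tri_nodes_def assms(2) by (auto simp: midpoint_sym)

lemma tri_nodes_subset_triangle:
  assumes "regular_triangulation \<Omega> \<T>" "T \<in> \<T>"
  shows "tri_nodes T \<subseteq> T"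
  using tri_vertex_in_triangle tri_segment_subset[OF assms] midpoint_in_closed_segment
  unfolding tri_nodes_def by blast

lemma tri_nodes_subset_mesh_nodes: "T \<in> \<T> \<Longrightarrow> tri_nodes T \<subseteq> mesh_verts \<T> \<union> mesh_mids \<T>"
  unfolding tri_nodes_def mesh_verts_def mesh_mids_def mesh_edges_def tri_edges_def by blast

lemma mesh_node_in_tri_nodes:
  assumes "y \<in> mesh_verts \<T> \<union> mesh_mids \<T>"
  obtains T where "T \<in> \<T>" "y \<in> tri_nodes T"
proof -
  have "\<exists>T\<in>\<T>. y \<in> tri_nodes T"
  proof (cases "y \<in> mesh_verts \<T>")
    case True
    then show ?thesis unfolding mesh_verts_def tri_nodes_def by blast
  next
    case False
    then obtain c d where "y = midpoint c d" "closed_segment c d \<in> mesh_edges \<T>"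
      using assms unfolding mesh_mids_def by blast
    then show ?thesis using mesh_edge_tri_verts unfolding tri_nodes_def by blast
  qed
  then show thesis using that by blast
qed

lemma tri_interpolant_exists:
  assumes "regular_triangulation \<Omega> \<T>" "T \<in> \<T>"
  shows "\<exists>P. quad_poly P \<and> (\<forall>y\<in>tri_nodes T. P y = \<delta> y)"
proof -
  obtain a b c where "\<not> collinear {a, b, c}" "T = convex hull {a, b, c}" "tri_verts T = {a, b, c}"
    using mesh_triangle[OF assms] .
  then show ?thesis using quad_poly_interpolates_triangle_nodes tri_nodes_triangle by metis
qed

lemma tri_interpolant_unique:
  assumes "regular_triangulation \<Omega> \<T>" "T \<in> \<T>" and "quad_poly P" "quad_poly Q"
    and "\<forall>y\<in>tri_nodes T. P y = Q y" and "x \<in> T"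
  shows "P x = Q x"
proof -
  obtain a b c where abc: "\<not> collinear {a, b, c}" "T = convex hull {a, b, c}" "tri_verts T = {a, b, c}"
    using mesh_triangle[OF assms(1,2)] .
  have "\<forall>y\<in>{a, b, c, midpoint a b, midpoint b c, midpoint a c}. P y - Q y = 0"
    using assms(5) unfolding tri_nodes_triangle[OF abc(1,3)] by simp
  moreover have "x \<in> convex hull {a, b, c}" using assms(6) abc(2) by simp
  ultimately have "P x - Q x = 0"
    by (rule quad_poly_unisolvent_triangle[OF abc(1) quad_poly_diff[OF assms(3,4)]])
  then show ?thesis by simp
qed

lemma mesh_triangles_meet:
  assumes "regular_triangulation \<Omega> \<T>" "T \<in> \<T>" "T' \<in> \<T>" "T \<noteq> T'" "x \<in> T" "x \<in> T'"
  obtains v where "v \<in> tri_verts T" "v \<in> tri_verts T'" "x = v"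
  | s t where "s \<in> tri_verts T" "t \<in> tri_verts T" "s \<in> tri_verts T'" "t \<in> tri_verts T'"
      "s \<noteq> t" "x \<in> closed_segment s t"
proof -
  consider v where "v \<in> tri_verts T" "v \<in> tri_verts T'" "T \<inter> T' = {v}"
    | e where "e \<in> tri_edges T" "e \<in> tri_edges T'" "T \<inter> T' = e"
    using mesh_conforming[OF assms(1-4)] assms(5,6) by blast
  then show thesis
  proof cases
    case 1
    then show thesis using that(1) assms(5,6) by blast
  next
    case 2
    then obtain s t s' t' where st: "s \<in> tri_verts T" "t \<in> tri_verts T" "s \<noteq> t"
        "s' \<in> tri_verts T'" "t' \<in> tri_verts T'" "T \<inter> T' = closed_segment s t"
        "closed_segment s t = closed_segment s' t'"
      unfolding tri_edges_def by blast
    then have "{s, t} = {s', t'}" by simp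
    then have "s \<in> tri_verts T'" "t \<in> tri_verts T'" using st(4,5) by (metis doubleton_eq_iff)+
    then show thesis using that(2) st(1-3,6) assms(5,6) by blast
  qed
qed

lemma tri_interpolants_agree:
  assumes RT: "regular_triangulation \<Omega> \<T>" and T: "T \<in> \<T>" "T' \<in> \<T>"
    and P: "quad_poly P" "\<forall>y\<in>tri_nodes T. P y = \<delta> y"
    and P': "quad_poly P'" "\<forall>y\<in>tri_nodes T'. P' y = \<delta> y"
    and x: "x \<in> T" "x \<in> T'"
  shows "P x = P' x"
proof (cases "T = T'")
  case True
  then show ?thesis using tri_interpolant_unique[OF RT T(1) P(1) P'(1)] P(2) P'(2) x by simp
next
  case False
  then show ?thesis
  proof (rule mesh_triangles_meet[OF RT T _ x])
    fix v assume "v \<in> tri_verts T" "v \<in> tri_verts T'" "x = v"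
    then show ?thesis using P(2) P'(2) unfolding tri_nodes_def by simp
  next
    fix s t assume st: "s \<in> tri_verts T" "t \<in> tri_verts T" "s \<in> tri_verts T'" "t \<in> tri_verts T'"
      "s \<noteq> t" "x \<in> closed_segment s t"
    then have "\<forall>y\<in>{s, t, midpoint s t}. P y = \<delta> y \<and> P' y = \<delta> y"
      using P(2) P'(2) unfolding tri_nodes_def by blast
    then have "P x - P' x = 0"
      using quad_poly_zero_on_segment[OF quad_poly_diff[OF P(1) P'(1)], of s t x] st(6) by simp
    then show ?thesis by simp
  qed
qed

lemma glue_local_functions:
  fixes R :: "'a set \<Rightarrow> ('a \<Rightarrow> 'b::zero) \<Rightarrow> bool"
  assumes agree: "\<And>S S' P P' x. S \<in> \<S> \<Longrightarrow> S' \<in> \<S> \<Longrightarrow> R S P \<Longrightarrow> R S' P' \<Longrightarrow> x \<in> S \<Longrightarrow> x \<in> S'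
      \<Longrightarrow> P x = P' x"
  obtains f where "\<And>S P x. S \<in> \<S> \<Longrightarrow> R S P \<Longrightarrow> x \<in> S \<Longrightarrow> f x = P x"
    and "\<And>x. x \<notin> \<Union>\<S> \<Longrightarrow> f x = 0"
proof -
  define f where "f x = (if x \<in> \<Union>\<S> then (SOME y. \<exists>S\<in>\<S>. x \<in> S \<and> (\<exists>P. R S P \<and> y = P x)) else 0)"
    for x
  have "f x = P x" if S: "S \<in> \<S>" "R S P" "x \<in> S" for S P x
  proof -
    have "\<exists>y. \<exists>S\<in>\<S>. x \<in> S \<and> (\<exists>P. R S P \<and> y = P x)" using S by blast
    from someI_ex[OF this] obtain S' P' where S': "S' \<in> \<S>" "x \<in> S'" "R S' P'"
      "(SOME y. \<exists>S\<in>\<S>. x \<in> S \<and> (\<exists>P. R S P \<and> y = P x)) = P' x" by blast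
    then show ?thesis using agree[OF S(1) S'(1) S(2) S'(3) S(3) S'(2)] S unfolding f_def by auto
  qed
  moreover have "f x = 0" if "x \<notin> \<Union>\<S>" for x using that by (simp add: f_def)
  ultimately show thesis using that by blast
qed

lemma continuous_on_Union_pieces:
  assumes "finite \<S>" "\<And>S. S \<in> \<S> \<Longrightarrow> closed S"
    and "\<And>S. S \<in> \<S> \<Longrightarrow> \<exists>P. continuous_on S P \<and> (\<forall>x\<in>S. f x = P x)"
  shows "continuous_on (\<Union>\<S>) f"
proof -
  have "continuous_on S f" if S: "S \<in> \<S>" for S
  proof -
    obtain P where "continuous_on S P" "\<forall>x\<in>S. f x = P x" using assms(3)[OF S] by blast
    then show ?thesis using continuous_on_eq by metis
  qed
  then show ?thesis using continuous_on_closed_Union[OF assms(1), of "\<lambda>S. S"] assms(2) by auto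
qed

definition lagrange_basis :: "pt set \<Rightarrow> pt set set \<Rightarrow> pt \<Rightarrow> (pt \<Rightarrow> real) \<Rightarrow> bool" where
  "lagrange_basis \<Omega> \<T> z f \<longleftrightarrow> continuous_on (closure \<Omega>) f \<and> (\<forall>T\<in>\<T>. quad_on T f) \<and>
      (\<forall>y\<in>mesh_verts \<T> \<union> mesh_mids \<T>. f y = (if y = z then 1 else 0)) \<and>
      (\<forall>x. x \<notin> closure \<Omega> \<longrightarrow> f x = 0)"

lemma lagrange_basis_exists:
  assumes RT: "regular_triangulation \<Omega> \<T>"
  shows "\<exists>f. lagrange_basis \<Omega> \<T> z f"
proof -
  define \<delta> where "\<delta> y = (if y = z then 1 else 0 :: real)" for y
  define R where "R T P \<longleftrightarrow> quad_poly P \<and> (\<forall>y\<in>tri_nodes T. P y = \<delta> y)" for T P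
  have local: "\<exists>P. R T P" if "T \<in> \<T>" for T
    using tri_interpolant_exists[OF RT that] unfolding R_def by blast
  obtain f where f: "\<And>T P x. T \<in> \<T> \<Longrightarrow> R T P \<Longrightarrow> x \<in> T \<Longrightarrow> f x = P x"
      and f0: "\<And>x. x \<notin> \<Union>\<T> \<Longrightarrow> f x = 0"
    using glue_local_functions[of \<T> R] tri_interpolants_agree[OF RT] unfolding R_def by blast
  have on_T: "\<exists>P. R T P \<and> (\<forall>x\<in>T. f x = P x)" if "T \<in> \<T>" for T
    using local[OF that] f[OF that] by blast
  note union = mesh_Union[OF RT]
  have "continuous_on (\<Union>\<T>) f"
  proof (rule continuous_on_Union_pieces)
    show "finite \<T>" using finite_mesh[OF RT] .
    show "closed T" if "T \<in> \<T>" for T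
      using mesh_triangle[OF RT that] by (metis compact_imp_closed finite.emptyI finite.insertI
          finite_imp_compact_convex_hull)
    show "\<exists>P. continuous_on T P \<and> (\<forall>x\<in>T. f x = P x)" if "T \<in> \<T>" for T
      using on_T[OF that] quad_poly_continuous_on unfolding R_def by blast
  qed
  moreover have "\<forall>T\<in>\<T>. quad_on T f"
    using on_T unfolding R_def quad_on_iff_quad_poly by blast
  moreover have "f y = \<delta> y" if y: "y \<in> mesh_verts \<T> \<union> mesh_mids \<T>" for y
  proof -
    obtain T where T: "T \<in> \<T>" "y \<in> tri_nodes T" using mesh_node_in_tri_nodes[OF y] .
    obtain P where "\<forall>y\<in>tri_nodes T. P y = \<delta> y" "\<forall>x\<in>T. f x = P x"
      using on_T[OF T(1)] unfolding R_def by blast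
    then show ?thesis using T(2) tri_nodes_subset_triangle[OF RT T(1)] by auto
  qed
  ultimately show ?thesis
    unfolding lagrange_basis_def union using f0 union by (auto simp: \<delta>_def)
qed

lemma lagrange_basis_unique:
  assumes RT: "regular_triangulation \<Omega> \<T>"
    and f: "lagrange_basis \<Omega> \<T> z f" and g: "lagrange_basis \<Omega> \<T> z g"
  shows "f = g"
proof
  fix x
  show "f x = g x"
  proof (cases "x \<in> closure \<Omega>")
    case False
    then show ?thesis using f g unfolding lagrange_basis_def by simp
  next
    case True
    then obtain T where T: "T \<in> \<T>" "x \<in> T" using mesh_Union[OF RT] by blast
    obtain P Q where P: "quad_poly P" "\<forall>x\<in>T. f x = P x" and Q: "quad_poly Q" "\<forall>x\<in>T. g x = Q x"
      using f g T(1) unfolding lagrange_basis_def quad_on_iff_quad_poly by meson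
    have "\<forall>y\<in>tri_nodes T. P y = Q y"
      using f g P(2) Q(2) tri_nodes_subset_triangle[OF RT T(1)] tri_nodes_subset_mesh_nodes[OF T(1)]
      unfolding lagrange_basis_def by (metis subsetD)
    then show ?thesis using tri_interpolant_unique[OF RT T(1) P(1) Q(1)] P(2) Q(2) T(2) by simp
  qed
qed

lemma psi_lagrange_basis:
  assumes "regular_triangulation \<Omega> \<T>"
  shows "lagrange_basis \<Omega> \<T> z (psi \<Omega> \<T> z)"
proof -
  have "psi \<Omega> \<T> z = (THE f. lagrange_basis \<Omega> \<T> z f)"
    unfolding psi_def lagrange_basis_def ..
  then show ?thesis
    using theI'[of "lagrange_basis \<Omega> \<T> z"] lagrange_basis_exists[OF assms]
      lagrange_basis_unique[OF assms] by metis
qed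

lemma lagrange_basis_vanishes_on_edge:
  assumes RT: "regular_triangulation \<Omega> \<T>" and f: "lagrange_basis \<Omega> \<T> z f"
    and e: "closed_segment a b \<in> mesh_edges \<T>" "z \<notin> closed_segment a b"
    and x: "x \<in> closed_segment a b"
  shows "f x = 0"
proof -
  obtain T where T: "T \<in> \<T>" "a \<in> tri_verts T" "b \<in> tri_verts T" and "a \<noteq> b"
    using mesh_edge_tri_verts[OF e(1)] by blast
  then have nodes: "{a, b, midpoint a b} \<subseteq> tri_nodes T" unfolding tri_nodes_def by blast
  obtain Q where Q: "quad_poly Q" "\<forall>x\<in>T. f x = Q x"
    using f T(1) unfolding lagrange_basis_def quad_on_iff_quad_poly by meson
  have "\<forall>y\<in>{a, b, midpoint a b}. Q y = 0"
  proof
    fix y assume y: "y \<in> {a, b, midpoint a b}"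
    then have "y \<noteq> z" using e(2) midpoint_in_closed_segment by auto
    moreover have "y \<in> T" "y \<in> mesh_verts \<T> \<union> mesh_mids \<T>"
      using y nodes tri_nodes_subset_triangle[OF RT T(1)] tri_nodes_subset_mesh_nodes[OF T(1)] by blast+
    ultimately show "Q y = 0" using f Q(2) unfolding lagrange_basis_def by auto
  qed
  then have "Q x = 0" using quad_poly_zero_on_segment[OF Q(1), of a b x] x by simp
  then show ?thesis using Q(2) x tri_segment_subset[OF RT T(1-3)] by auto
qed

section \<open>Nodal basis on the contact boundary\<close>

lemma endpoint_notin_half_segment:
  fixes a b :: "'a::euclidean_space"
  assumes "a \<noteq> b"
  shows "b \<notin> closed_segment a (midpoint a b)"
proof
  assume "b \<in> closed_segment a (midpoint a b)"
  then have "dist a b \<le> dist a (midpoint a b)"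
    using dist_in_closed_segment by (metis dist_commute)
  then show False using assms by (simp add: dist_midpoint)
qed

lemma half_segment_subset: "closed_segment a (midpoint a b) \<subseteq> closed_segment a b"
  by (simp add: closed_segment_subset)

lemma half_segments_meet:
  fixes a b :: "'a::euclidean_space"
  assumes "x \<in> closed_segment a (midpoint a b)" "x \<in> closed_segment b (midpoint a b)"
  shows "x = midpoint a b"
proof -
  have "closed_segment a (midpoint a b) \<inter> closed_segment (midpoint a b) b = {midpoint a b}"
    by (rule Int_closed_segment) simp
  then show ?thesis using assms by (auto simp: closed_segment_commute)
qed

lemma half_edgeI:
  "a \<noteq> b \<Longrightarrow> closed_segment a b \<in> contact_edges \<T> \<Gamma>C \<Longrightarrow>
    closed_segment a (midpoint a b) \<in> half_edges \<T> \<Gamma>C"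
  unfolding half_edges_def by blast

lemma half_edgesE:
  assumes "S \<in> half_edges \<T> \<Gamma>C"
  obtains a b where "a \<noteq> b" "closed_segment a b \<in> contact_edges \<T> \<Gamma>C"
    "S = closed_segment a (midpoint a b)"
  using assms unfolding half_edges_def by blast

lemma contact_edge_ends_contact_nodes:
  assumes "a \<noteq> b" "closed_segment a b \<in> contact_edges \<T> \<Gamma>C"
  shows "a \<in> contact_nodes \<T> \<Gamma>C" "midpoint a b \<in> contact_nodes \<T> \<Gamma>C"
proof -
  have "a \<in> mesh_verts \<T>"
    using mesh_edge_tri_verts assms(2) unfolding contact_edges_def mesh_verts_def by blast
  moreover have "a \<in> closure \<Gamma>C" using assms(2) unfolding contact_edges_def by auto
  ultimately show "a \<in> contact_nodes \<T> \<Gamma>C" unfolding contact_nodes_def by blast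
  show "midpoint a b \<in> contact_nodes \<T> \<Gamma>C" using assms unfolding contact_nodes_def by blast
qed

lemma contact_nodes_subset_mesh_nodes:
  "contact_nodes \<T> \<Gamma>C \<subseteq> (mesh_verts \<T> \<union> mesh_mids \<T>) \<inter> closure \<Gamma>C"
  unfolding contact_nodes_def contact_edges_def mesh_mids_def
  using midpoint_in_closed_segment by blast

lemma contact_nodes_on_half_edge:
  assumes RT: "regular_triangulation \<Omega> \<T>"
    and ab: "a \<noteq> b" "closed_segment a b \<in> contact_edges \<T> \<Gamma>C"
    and y: "y \<in> contact_nodes \<T> \<Gamma>C" "y \<in> closed_segment a (midpoint a b)"
  shows "y = a \<or> y = midpoint a b"
proof -
  have "y \<in> closed_segment a b" using y(2) half_segment_subset by blast
  then have "y \<in> {a, b, midpoint a b}"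
    using mesh_node_on_edge[OF RT _ _] y(1) ab(2) contact_nodes_subset_mesh_nodes
    unfolding contact_edges_def by blast
  then show ?thesis using endpoint_notin_half_segment[OF ab(1)] y(2) by blast
qed

lemma half_edges_cover:
  assumes "\<exists>E\<subseteq>mesh_edges \<T>. closure \<Gamma>C = \<Union>E"
  shows "closure \<Gamma>C = \<Union>(half_edges \<T> \<Gamma>C)"
proof
  show "\<Union>(half_edges \<T> \<Gamma>C) \<subseteq> closure \<Gamma>C"
    unfolding half_edges_def contact_edges_def using half_segment_subset by blast
next
  show "closure \<Gamma>C \<subseteq> \<Union>(half_edges \<T> \<Gamma>C)"
  proof
    fix x assume "x \<in> closure \<Gamma>C"
    then obtain e where e: "e \<in> mesh_edges \<T>" "e \<subseteq> closure \<Gamma>C" "x \<in> e" using assms by blast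
    then obtain a b where ab: "a \<noteq> b" "e = closed_segment a b"
      unfolding mesh_edges_def tri_edges_def by blast
    then have "closed_segment a b \<in> contact_edges \<T> \<Gamma>C" "closed_segment b a \<in> contact_edges \<T> \<Gamma>C"
      using e(1,2) unfolding contact_edges_def by (auto simp: closed_segment_commute)
    then have "closed_segment a (midpoint a b) \<in> half_edges \<T> \<Gamma>C"
      "closed_segment b (midpoint b a) \<in> half_edges \<T> \<Gamma>C"
      using ab(1) by (simp_all add: half_edgeI)
    moreover have "x \<in> closed_segment a (midpoint a b) \<union> closed_segment b (midpoint b a)"
      using Un_closed_segment[of "midpoint a b" a b] e(3) ab(2)
      by (simp add: closed_segment_commute midpoint_sym)
    ultimately show "x \<in> \<Union>(half_edges \<T> \<Gamma>C)" by blast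
  qed
qed

lemma finite_half_edges:
  assumes "regular_triangulation \<Omega> \<T>"
  shows "finite (half_edges \<T> \<Gamma>C)"
proof -
  have "half_edges \<T> \<Gamma>C \<subseteq> (\<lambda>(a, b). closed_segment a (midpoint a b)) ` (mesh_verts \<T> \<times> mesh_verts \<T>)"
    unfolding half_edges_def contact_edges_def mesh_verts_def using mesh_edge_tri_verts by fast
  then show ?thesis using finite_mesh_verts[OF assms] finite_subset by blast
qed

lemma finite_contact_nodes:
  assumes "regular_triangulation \<Omega> \<T>"
  shows "finite (contact_nodes \<T> \<Gamma>C)"
proof -
  have "contact_nodes \<T> \<Gamma>C \<subseteq> mesh_verts \<T> \<union> (\<lambda>(a, b). midpoint a b) ` (mesh_verts \<T> \<times> mesh_verts \<T>)"
    unfolding contact_nodes_def contact_edges_def mesh_verts_def using mesh_edge_tri_verts by fast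
  then show ?thesis using finite_mesh_verts[OF assms] finite_subset by blast
qed

lemma half_edges_meet:
  assumes RT: "regular_triangulation \<Omega> \<T>"
    and S: "S \<in> half_edges \<T> \<Gamma>C" and S': "S' \<in> half_edges \<T> \<Gamma>C" and x: "x \<in> S" "x \<in> S'"
  shows "S = S' \<or> x \<in> contact_nodes \<T> \<Gamma>C"
proof -
  obtain a b where ab: "a \<noteq> b" "closed_segment a b \<in> contact_edges \<T> \<Gamma>C"
      "S = closed_segment a (midpoint a b)"
    using S by (rule half_edgesE)
  obtain c d where cd: "c \<noteq> d" "closed_segment c d \<in> contact_edges \<T> \<Gamma>C"
      "S' = closed_segment c (midpoint c d)"
    using S' by (rule half_edgesE)
  have "{a, b} = {c, d} \<or> (x \<in> {a, b} \<and> x \<in> {c, d})"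
    using mesh_edges_meet[OF RT] ab(2) cd(2) x ab(3) cd(3) half_segment_subset
    unfolding contact_edges_def by blast
  then consider "a = c" "b = d" | "a = d" "b = c" | "x = a"
    using x ab(1,3) cd(1,3) endpoint_notin_half_segment by (metis doubleton_eq_iff insert_iff singletonD)
  then show ?thesis
  proof cases
    case 2
    then have "x = midpoint a b"
      using half_segments_meet x ab(3) cd(3) by (metis midpoint_sym)
    then show ?thesis using contact_edge_ends_contact_nodes[OF ab(1,2)] by simp
  qed (use ab cd contact_edge_ends_contact_nodes[OF ab(1,2)] in simp_all)
qed

definition contact_basis :: "pt set set \<Rightarrow> pt set \<Rightarrow> pt \<Rightarrow> (pt \<Rightarrow> real) \<Rightarrow> bool" where
  "contact_basis \<T> \<Gamma>C z f \<longleftrightarrow> continuous_on (closure \<Gamma>C) f \<and> (\<forall>S\<in>half_edges \<T> \<Gamma>C. aff_on S f) \<and>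
      (\<forall>y\<in>contact_nodes \<T> \<Gamma>C. f y = (if y = z then 1 else 0)) \<and>
      (\<forall>x. x \<notin> closure \<Gamma>C \<longrightarrow> f x = 0)"

lemma contact_interpolant_exists:
  assumes RT: "regular_triangulation \<Omega> \<T>" and S: "S \<in> half_edges \<T> \<Gamma>C"
  shows "\<exists>A. aff_poly A \<and> (\<forall>y\<in>S \<inter> contact_nodes \<T> \<Gamma>C. A y = \<delta> y)"
proof -
  obtain a b where ab: "a \<noteq> b" "closed_segment a b \<in> contact_edges \<T> \<Gamma>C"
      "S = closed_segment a (midpoint a b)"
    using S by (rule half_edgesE)
  then have "a \<noteq> midpoint a b" by (metis midpoint_eq_endpoint)
  then obtain A where "aff_poly A" "A a = \<delta> a" "A (midpoint a b) = \<delta> (midpoint a b)"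
    using aff_poly_interpolates_two_points by blast
  then show ?thesis using contact_nodes_on_half_edge[OF RT ab(1,2)] ab(3) by blast
qed

lemma contact_interpolants_agree:
  assumes RT: "regular_triangulation \<Omega> \<T>"
    and S: "S \<in> half_edges \<T> \<Gamma>C" "S' \<in> half_edges \<T> \<Gamma>C"
    and A: "aff_poly A" "\<forall>y\<in>S \<inter> contact_nodes \<T> \<Gamma>C. A y = \<delta> y"
    and A': "aff_poly A'" "\<forall>y\<in>S' \<inter> contact_nodes \<T> \<Gamma>C. A' y = \<delta> y"
    and x: "x \<in> S" "x \<in> S'"
  shows "A x = A' x"
  using half_edges_meet[OF RT S x]
proof
  assume "S = S'"
  obtain a b where ab: "a \<noteq> b" "closed_segment a b \<in> contact_edges \<T> \<Gamma>C"
      "S = closed_segment a (midpoint a b)"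
    using S(1) by (rule half_edgesE)
  then have "A a = A' a" "A (midpoint a b) = A' (midpoint a b)"
    using A(2) A'(2) \<open>S = S'\<close> contact_edge_ends_contact_nodes[OF ab(1,2)] by auto
  then show ?thesis using aff_poly_eq_on_segment[OF A(1) A'(1)] x(1) ab(3) by blast
qed (use A(2) A'(2) x in auto)

lemma contact_basis_exists:
  assumes RT: "regular_triangulation \<Omega> \<T>" and cover: "\<exists>E\<subseteq>mesh_edges \<T>. closure \<Gamma>C = \<Union>E"
  shows "\<exists>f. contact_basis \<T> \<Gamma>C z f"
proof -
  define \<delta> where "\<delta> y = (if y = z then 1 else 0 :: real)" for y
  define R where "R S A \<longleftrightarrow> aff_poly A \<and> (\<forall>y\<in>S \<inter> contact_nodes \<T> \<Gamma>C. A y = \<delta> y)" for S A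
  note union = half_edges_cover[OF cover]
  obtain f where f: "\<And>S A x. S \<in> half_edges \<T> \<Gamma>C \<Longrightarrow> R S A \<Longrightarrow> x \<in> S \<Longrightarrow> f x = A x"
      and f0: "\<And>x. x \<notin> \<Union>(half_edges \<T> \<Gamma>C) \<Longrightarrow> f x = 0"
    using glue_local_functions[of "half_edges \<T> \<Gamma>C" R] contact_interpolants_agree[OF RT]
    unfolding R_def by blast
  have on_S: "\<exists>A. R S A \<and> (\<forall>x\<in>S. f x = A x)" if "S \<in> half_edges \<T> \<Gamma>C" for S
    using contact_interpolant_exists[OF RT that] f[OF that] unfolding R_def by blast
  have "continuous_on (\<Union>(half_edges \<T> \<Gamma>C)) f"
  proof (rule continuous_on_Union_pieces)
    show "finite (half_edges \<T> \<Gamma>C)" using finite_half_edges[OF RT] .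
    show "closed S" if "S \<in> half_edges \<T> \<Gamma>C" for S
      using that by (auto elim: half_edgesE)
    show "\<exists>A. continuous_on S A \<and> (\<forall>x\<in>S. f x = A x)" if "S \<in> half_edges \<T> \<Gamma>C" for S
      using on_S[OF that] quad_poly_continuous_on aff_poly_imp_quad_poly unfolding R_def by blast
  qed
  moreover have "\<forall>S\<in>half_edges \<T> \<Gamma>C. aff_on S f"
    using on_S unfolding R_def aff_on_iff_aff_poly by blast
  moreover have "f y = \<delta> y" if y: "y \<in> contact_nodes \<T> \<Gamma>C" for y
  proof -
    obtain S where S: "S \<in> half_edges \<T> \<Gamma>C" "y \<in> S"
      using y contact_nodes_subset_mesh_nodes union by blast
    obtain A where "\<forall>y\<in>S \<inter> contact_nodes \<T> \<Gamma>C. A y = \<delta> y" "\<forall>x\<in>S. f x = A x"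
      using on_S[OF S(1)] unfolding R_def by blast
    then show ?thesis using S(2) y by auto
  qed
  ultimately show ?thesis
    unfolding contact_basis_def union using f0 by (auto simp: \<delta>_def)
qed

lemma contact_basis_unique:
  assumes cover: "\<exists>E\<subseteq>mesh_edges \<T>. closure \<Gamma>C = \<Union>E"
    and f: "contact_basis \<T> \<Gamma>C z f" and g: "contact_basis \<T> \<Gamma>C z g"
  shows "f = g"
proof
  fix x
  show "f x = g x"
  proof (cases "x \<in> closure \<Gamma>C")
    case False
    then show ?thesis using f g unfolding contact_basis_def by simp
  next
    case True
    then obtain S where S: "S \<in> half_edges \<T> \<Gamma>C" "x \<in> S" using half_edges_cover[OF cover] by blast
    obtain a b where ab: "a \<noteq> b" "closed_segment a b \<in> contact_edges \<T> \<Gamma>C"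
        "S = closed_segment a (midpoint a b)"
      using S(1) by (rule half_edgesE)
    obtain A B where A: "aff_poly A" "\<forall>x\<in>S. f x = A x" and B: "aff_poly B" "\<forall>x\<in>S. g x = B x"
      using f g S(1) unfolding contact_basis_def aff_on_iff_aff_poly by meson
    have "f y = g y" if "y \<in> contact_nodes \<T> \<Gamma>C" for y
      using f g that unfolding contact_basis_def by simp
    moreover have "a \<in> S" "midpoint a b \<in> S" using ab(3) by simp_all
    ultimately have "A a = B a" "A (midpoint a b) = B (midpoint a b)"
      using A(2) B(2) contact_edge_ends_contact_nodes[OF ab(1,2)] by auto
    then have "A x = B x" using aff_poly_eq_on_segment[OF A(1) B(1)] S(2) ab(3) by blast
    then show ?thesis using A(2) B(2) S(2) by simp
  qed
qed

lemma phi_contact_basis: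
  assumes "regular_triangulation \<Omega> \<T>" "\<exists>E\<subseteq>mesh_edges \<T>. closure \<Gamma>C = \<Union>E"
  shows "contact_basis \<T> \<Gamma>C z (phi \<T> \<Gamma>C z)"
proof -
  have "phi \<T> \<Gamma>C z = (THE f. contact_basis \<T> \<Gamma>C z f)"
    unfolding phi_def contact_basis_def ..
  then show ?thesis
    using theI'[of "contact_basis \<T> \<Gamma>C z"] contact_basis_exists[OF assms]
      contact_basis_unique[OF assms(2)] by metis
qed

section \<open>Linearity of the forms in the test function\<close>

lemma Dv_scale: "Dv (\<lambda>x. t *\<^sub>R v x) x h = t *\<^sub>R Dv v x h"
proof (cases "t = 0")
  case True
  have "frechet_derivative (\<lambda>x. 0::pt) (at x) = (\<lambda>h. 0)"
    using frechet_derivative_at[OF has_derivative_const] by metis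
  then show ?thesis using True unfolding Dv_def by simp
next
  case False
  have "(\<lambda>x. t *\<^sub>R v x) differentiable (at x) \<longleftrightarrow> v differentiable (at x)"
  proof
    assume "(\<lambda>x. t *\<^sub>R v x) differentiable (at x)"
    then obtain D where "((\<lambda>x. t *\<^sub>R v x) has_derivative D) (at x)"
      unfolding differentiable_def by blast
    then have "((\<lambda>x. (1/t) *\<^sub>R (t *\<^sub>R v x)) has_derivative (\<lambda>h. (1/t) *\<^sub>R D h)) (at x)"
      by (rule has_derivative_scaleR_right)
    then show "v differentiable (at x)" using False unfolding differentiable_def by auto
  next
    assume "v differentiable (at x)"
    then show "(\<lambda>x. t *\<^sub>R v x) differentiable (at x)"
      unfolding differentiable_def using has_derivative_scaleR_right by blast
  qed
  moreover have "frechet_derivative (\<lambda>x. t *\<^sub>R v x) (at x) = (\<lambda>h. t *\<^sub>R frechet_derivative v (at x) h)"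
    if "v differentiable (at x)"
    using frechet_derivative_at[OF has_derivative_scaleR_right[OF frechet_derivative_works[THEN iffD1, OF that]]]
    by metis
  ultimately show ?thesis unfolding Dv_def by simp
qed

lemma strain_scale: "strain (\<lambda>x. t *\<^sub>R v x) i j x = t * strain v i j x"
  unfolding strain_def pd_def Dv_scale by (simp add: algebra_simps)

lemma aform_scale: "aform \<Omega> chi mu w (\<lambda>x. t *\<^sub>R v x) = t * aform \<Omega> chi mu w v"
proof -
  have "(\<lambda>x. \<Sum>i\<in>UNIV. \<Sum>j\<in>UNIV. stress chi mu w i j x * strain (\<lambda>x. t *\<^sub>R v x) i j x) =
      (\<lambda>x. t * (\<Sum>i\<in>UNIV. \<Sum>j\<in>UNIV. stress chi mu w i j x * strain v i j x))"
    unfolding strain_scale by (simp add: sum_distrib_left algebra_simps)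
  then show ?thesis unfolding aform_def by simp
qed

lemma line_int_scale: "line_int \<Omega> \<T> S (\<lambda>x. t * h x) = t * line_int \<Omega> \<T> S h"
  unfolding line_int_def edge_int_def by (simp add: sum_distrib_left algebra_simps)

lemma Lform_scale: "Lform \<Omega> \<T> \<Gamma>N f g (\<lambda>x. t *\<^sub>R v x) = t * Lform \<Omega> \<T> \<Gamma>N f g v"
  using line_int_scale[of \<Omega> \<T> \<Gamma>N t "\<lambda>x. g x \<bullet> v x"] unfolding Lform_def by (simp add: algebra_simps)

section \<open>Perturbation at a node without actual contact\<close>

lemma setting_regular_triangulation: "setting \<Omega> \<T> \<Gamma>D \<Gamma>N \<Gamma>C \<Longrightarrow> regular_triangulation \<Omega> \<T>"
  unfolding setting_def by (elim conjE)

lemma setting_contact_edges: "setting \<Omega> \<T> \<Gamma>D \<Gamma>N \<Gamma>C \<Longrightarrow> \<exists>E\<subseteq>mesh_edges \<T>. closure \<Gamma>C = \<Union>E"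
  unfolding setting_def by (elim conjE)

lemma setting_Dirichlet_edges: "setting \<Omega> \<T> \<Gamma>D \<Gamma>N \<Gamma>C \<Longrightarrow> \<exists>E\<subseteq>mesh_edges \<T>. closure \<Gamma>D = \<Union>E"
  unfolding setting_def by (elim conjE)

lemma setting_contact_Dirichlet_disjoint:
  assumes "setting \<Omega> \<T> \<Gamma>D \<Gamma>N \<Gamma>C"
  shows "closure \<Gamma>C \<inter> closure \<Gamma>D = {}"
proof -
  have "closure \<Gamma>C \<subseteq> frontier \<Omega> - closure \<Gamma>D" using assms unfolding setting_def by (elim conjE)
  then show ?thesis by blast
qed

lemma psi_vanishes_on_Dirichlet:
  assumes S: "setting \<Omega> \<T> \<Gamma>D \<Gamma>N \<Gamma>C" and p: "p \<in> contact_nodes \<T> \<Gamma>C" and x: "x \<in> \<Gamma>D"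
  shows "psi \<Omega> \<T> p x = 0"
proof -
  obtain e where e: "e \<in> mesh_edges \<T>" "e \<subseteq> closure \<Gamma>D" "x \<in> e"
    using setting_Dirichlet_edges[OF S] x closure_subset by blast
  then obtain a b where ab: "e = closed_segment a b" unfolding mesh_edges_def tri_edges_def by blast
  have "p \<notin> e"
    using p e(2) contact_nodes_subset_mesh_nodes setting_contact_Dirichlet_disjoint[OF S] by blast
  then show ?thesis
    using lagrange_basis_vanishes_on_edge[OF setting_regular_triangulation[OF S]
        psi_lagrange_basis[OF setting_regular_triangulation[OF S]]] e(1,3) ab by blast
qed

lemma Qh_phi_scaled:
  assumes "regular_triangulation \<Omega> \<T>" "\<exists>E\<subseteq>mesh_edges \<T>. closure \<Gamma>C = \<Union>E"
  shows "Qh \<T> \<Gamma>C (\<lambda>x. phi \<T> \<Gamma>C p x *\<^sub>R e)"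
proof -
  have phi: "contact_basis \<T> \<Gamma>C p (phi \<T> \<Gamma>C p)" by (rule phi_contact_basis[OF assms])
  have "aff_on S (\<lambda>x. (phi \<T> \<Gamma>C p x *\<^sub>R e) $ i)" if S: "S \<in> half_edges \<T> \<Gamma>C" for S i
  proof -
    obtain A where "aff_poly A" "\<forall>x\<in>S. phi \<T> \<Gamma>C p x = A x"
      using phi S unfolding contact_basis_def aff_on_iff_aff_poly by blast
    then show ?thesis
      unfolding aff_on_iff_aff_poly by (intro exI[of _ "\<lambda>x. e $ i * A x"]) (simp add: aff_poly_scale)
  qed
  moreover have "continuous_on (closure \<Gamma>C) (\<lambda>x. phi \<T> \<Gamma>C p x *\<^sub>R e)"
    using phi unfolding contact_basis_def by (simp add: continuous_intros)
  ultimately show ?thesis unfolding Qh_def by blast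
qed

lemma pi_h_phi_scaled:
  assumes "regular_triangulation \<Omega> \<T>" "\<exists>E\<subseteq>mesh_edges \<T>. closure \<Gamma>C = \<Union>E"
    and p: "p \<in> contact_nodes \<T> \<Gamma>C"
  shows "pi_h \<Omega> \<T> \<Gamma>C (\<lambda>x. phi \<T> \<Gamma>C p x *\<^sub>R e) = (\<lambda>x. psi \<Omega> \<T> p x *\<^sub>R e)"
proof
  fix x
  have nodal: "\<forall>z\<in>contact_nodes \<T> \<Gamma>C. phi \<T> \<Gamma>C p z = (if z = p then 1 else 0)"
    using phi_contact_basis[OF assms(1,2)] unfolding contact_basis_def by blast
  have coords: "(\<Sum>i\<in>UNIV. (e $ i * c) *\<^sub>R axis i 1) = c *\<^sub>R e" for c
    by (simp add: vec_eq_iff sum_2 axis_def forall_2)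
  have "(\<Sum>i\<in>UNIV. ((phi \<T> \<Gamma>C p z *\<^sub>R e) $ i * psi \<Omega> \<T> z x) *\<^sub>R axis i 1) =
      (if z = p then psi \<Omega> \<T> p x *\<^sub>R e else 0)" if "z \<in> contact_nodes \<T> \<Gamma>C" for z
    using nodal that coords by (cases "z = p") simp_all
  then have "pi_h \<Omega> \<T> \<Gamma>C (\<lambda>x. phi \<T> \<Gamma>C p x *\<^sub>R e) x =
      (\<Sum>z\<in>contact_nodes \<T> \<Gamma>C. if z = p then psi \<Omega> \<T> p x *\<^sub>R e else 0)"
    unfolding pi_h_def by (rule sum.cong[OF refl])
  also have "\<dots> = psi \<Omega> \<T> p x *\<^sub>R e" using finite_contact_nodes[OF assms(1)] p by simp
  finally show "pi_h \<Omega> \<T> \<Gamma>C (\<lambda>x. phi \<T> \<Gamma>C p x *\<^sub>R e) x = psi \<Omega> \<T> p x *\<^sub>R e" .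
qed

lemma Kh_add_psi_e1:
  assumes S: "setting \<Omega> \<T> \<Gamma>D \<Gamma>N \<Gamma>C" and u: "Kh \<Omega> \<T> \<Gamma>D \<Gamma>C u"
    and p: "p \<in> contact_nodes \<T> \<Gamma>C" and t: "t \<le> - u p $ 1"
  shows "Kh \<Omega> \<T> \<Gamma>D \<Gamma>C (\<lambda>x. u x + t *\<^sub>R (psi \<Omega> \<T> p x *\<^sub>R axis 1 1))"
proof -
  note RT = setting_regular_triangulation[OF S]
  have psi: "lagrange_basis \<Omega> \<T> p (psi \<Omega> \<T> p)" by (rule psi_lagrange_basis[OF RT])
  have Vu: "Vh \<Omega> \<T> \<Gamma>D u" and Ku: "\<forall>z\<in>contact_nodes \<T> \<Gamma>C. u z $ 1 \<le> 0"
    using u unfolding Kh_def by blast+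
  have "continuous_on (closure \<Omega>) (\<lambda>x. u x + t *\<^sub>R (psi \<Omega> \<T> p x *\<^sub>R axis 1 1))"
    using Vu psi unfolding Vh_def lagrange_basis_def by (simp add: continuous_intros)
  moreover have "quad_on T (\<lambda>x. (u x + t *\<^sub>R (psi \<Omega> \<T> p x *\<^sub>R axis 1 1)) $ i)"
    if T: "T \<in> \<T>" for T i
  proof -
    obtain P where P: "quad_poly P" "\<forall>x\<in>T. u x $ i = P x"
      using Vu T unfolding Vh_def quad_on_iff_quad_poly by blast
    obtain Q where Q: "quad_poly Q" "\<forall>x\<in>T. psi \<Omega> \<T> p x = Q x"
      using psi T unfolding lagrange_basis_def quad_on_iff_quad_poly by blast
    have "quad_poly (\<lambda>x. P x + (t * axis 1 1 $ i) * Q x)"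
      by (intro quad_poly_add quad_poly_scale P(1) Q(1))
    then show ?thesis unfolding quad_on_iff_quad_poly using P(2) Q(2) by (auto simp: algebra_simps)
  qed
  moreover have "u x + t *\<^sub>R (psi \<Omega> \<T> p x *\<^sub>R axis 1 1) = 0" if "x \<in> \<Gamma>D" for x
    using Vu that psi_vanishes_on_Dirichlet[OF S p that] unfolding Vh_def by simp
  moreover have "(u z + t *\<^sub>R (psi \<Omega> \<T> p z *\<^sub>R axis 1 1)) $ 1 \<le> 0"
    if z: "z \<in> contact_nodes \<T> \<Gamma>C" for z
  proof -
    have "psi \<Omega> \<T> p z = (if z = p then 1 else 0)"
      using psi z contact_nodes_subset_mesh_nodes unfolding lagrange_basis_def by blast
    then show ?thesis using Ku z t by (simp add: axis_def)
  qed
  ultimately show ?thesis unfolding Kh_def Vh_def by blast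
qed

theorem lemma4p3:
  fixes \<Omega> \<Gamma>D \<Gamma>N \<Gamma>C :: "pt set" and \<T> :: "pt set set"
    and chi mu :: real and f g u lam :: "pt \<Rightarrow> pt" and p :: pt
  assumes "setting \<Omega> \<T> \<Gamma>D \<Gamma>N \<Gamma>C"
    and "chi > 0" and "mu > 0"
    and "L2_dom \<Omega> f" and "L2_bdry \<Omega> \<T> \<Gamma>N g"
    and "Kh \<Omega> \<T> \<Gamma>D \<Gamma>C u"
    and "\<forall>v. Kh \<Omega> \<T> \<Gamma>D \<Gamma>C v \<longrightarrow>
           aform \<Omega> chi mu u (\<lambda>x. v x - u x) \<ge> Lform \<Omega> \<T> \<Gamma>N f g (\<lambda>x. v x - u x)"
    and "Qh \<T> \<Gamma>C lam"
    and "\<forall>v. Qh \<T> \<Gamma>C v \<longrightarrow>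
           dpair \<Omega> \<T> \<Gamma>C lam v = Lform \<Omega> \<T> \<Gamma>N f g (pi_h \<Omega> \<T> \<Gamma>C v) - aform \<Omega> chi mu u (pi_h \<Omega> \<T> \<Gamma>C v)"
    and "p \<in> contact_nodes \<T> \<Gamma>C"
    and "u p $ 1 \<noteq> 0"
  shows "dpair \<Omega> \<T> \<Gamma>C lam (\<lambda>x. phi \<T> \<Gamma>C p x *\<^sub>R axis 1 1) = 0"
proof -
  note RT = setting_regular_triangulation[OF assms(1)]
    and cover = setting_contact_edges[OF assms(1)]
  define w where "w = (\<lambda>x. psi \<Omega> \<T> p x *\<^sub>R (axis 1 1 :: pt))"
  have gap: "u p $ 1 < 0" using assms(6,10,11) unfolding Kh_def by force
  have "t * Lform \<Omega> \<T> \<Gamma>N f g w \<le> t * aform \<Omega> chi mu u w" if t: "t \<le> - u p $ 1" for t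
  proof -
    have "Kh \<Omega> \<T> \<Gamma>D \<Gamma>C (\<lambda>x. u x + t *\<^sub>R w x)"
      using Kh_add_psi_e1[OF assms(1,6,10) t] unfolding w_def .
    then have "Lform \<Omega> \<T> \<Gamma>N f g (\<lambda>x. t *\<^sub>R w x) \<le> aform \<Omega> chi mu u (\<lambda>x. t *\<^sub>R w x)"
      using assms(7) by fastforce
    then show ?thesis by (simp add: aform_scale Lform_scale)
  qed
  from this[of "- u p $ 1"] this[of "u p $ 1"] gap
  have balance: "aform \<Omega> chi mu u w = Lform \<Omega> \<T> \<Gamma>N f g w" by (simp add: mult_le_cancel_left)
  have "dpair \<Omega> \<T> \<Gamma>C lam (\<lambda>x. phi \<T> \<Gamma>C p x *\<^sub>R axis 1 1) =
      Lform \<Omega> \<T> \<Gamma>N f g (pi_h \<Omega> \<T> \<Gamma>C (\<lambda>x. phi \<T> \<Gamma>C p x *\<^sub>R axis 1 1))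
      - aform \<Omega> chi mu u (pi_h \<Omega> \<T> \<Gamma>C (\<lambda>x. phi \<T> \<Gamma>C p x *\<^sub>R axis 1 1))"
    using assms(9) Qh_phi_scaled[OF RT cover] by blast
  also have "\<dots> = Lform \<Omega> \<T> \<Gamma>N f g w - aform \<Omega> chi mu u w"
    using pi_h_phi_scaled[OF RT cover assms(10)] by (simp add: w_def)
  finally show ?thesis using balance by simp
qed

end
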